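(* Let $\underline{E}=(E_p)_{p\in\mathbb{P}}$ be a family with $E_p\subseteq\overline{\mathbb{Z}_p}$ for every prime $p$, and let $R=\textnormal{Int}_{\mathbb{Q}}(\underline{E},\overline{\widehat{\mathbb{Z}}})$. Let $P$ be a finite set of primes and let $S$ be the multiplicative subset of $\mathbb{Z}$ generated by $\mathbb{P}\setminus P$. Then $$S^{-1}R=\bigcap_{p\in P}\textnormal{Int}_{\mathbb{Q}}(E_p,\overline{\mathbb{Z}_p}).$$ In particular, for each prime $p$, $(\mathbb{Z}\setminus p\mathbb{Z})^{-1}R=\textnormal{Int}_{\mathbb{Q}}(E_p,\overline{\mathbb{Z}_p})$.
   Context: $\mathbb{P}$ is the set of prime numbers. For a prime $p$, $\mathbb{Z}_p$ is the ring of $p$-adic integers, $\overline{\mathbb{Q}_p}$ a fixed algebraic closure of $\mathbb{Q}_p$, $\overline{\mathbb{Z}_p}$ the integral closure of $\mathbb{Z}_p$ in $\overline{\mathbb{Q}_p}$, and $v_p$ the unique extension of the $p$-adic valuation to $\overline{\mathbb{Q}_p}$. For $E_p\subseteq\overline{\mathbb{Z}_p}$, $\textnormal{Int}_{\mathbb{Q}}(E_p,\overline{\mathbb{Z}_p})=\{f\in\mathbb{Q}[X]\mid f(\alpha)\in\overline{\mathbb{Z}_p}\ \forall\alpha\in E_p\}$ (this is $\mathbb{Q}[X]$ if $E_p=\emptyset$). For a family $\underline{E}=(E_p)_p$ (written $\prod_pE_p\subseteq\overline{\widehat{\mathbb{Z}}}=\prod_p\overline{\mathbb{Z}_p}$;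 components may be empty), $\textnormal{Int}_{\mathbb{Q}}(\underline{E},\overline{\widehat{\mathbb{Z}}})=\bigcap_{p\in\mathbb{P}}\textnormal{Int}_{\mathbb{Q}}(E_p,\overline{\mathbb{Z}_p})$, i.e. the polynomials $f\in\mathbb{Q}[X]$ with $f(\alpha_p)\in\overline{\mathbb{Z}_p}$ for all $p$ and all $\alpha_p\in E_p$. *)

theory Defs
  imports "HOL-Algebra.Algebraic_Closure" "HOL-Computational_Algebra.Computational_Algebra"
begin

definition rat_vp :: "nat \<Rightarrow> rat \<Rightarrow> int" where
  "rat_vp p q = (case quotient_of q of (a, b) \<Rightarrow>
      int (Factorial_Ring.multiplicity (int p) a) - int (Factorial_Ring.multiplicity (int p) b))"

definition padic_cauchy :: "nat \<Rightarrow> (nat \<Rightarrow> rat) \<Rightarrow> bool" where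
  "padic_cauchy p u \<longleftrightarrow>
     (\<forall>k::int. \<exists>N::nat. \<forall>m n. N \<le> m \<longrightarrow> N \<le> n \<longrightarrow> u m = u n \<or> k \<le> rat_vp p (u m - u n))"

definition padic_null :: "nat \<Rightarrow> (nat \<Rightarrow> rat) \<Rightarrow> bool" where
  "padic_null p u \<longleftrightarrow> (\<forall>k::int. \<exists>N::nat. \<forall>n. N \<le> n \<longrightarrow> u n = 0 \<or> k \<le> rat_vp p (u n))"

definition padic_rel :: "nat \<Rightarrow> ((nat \<Rightarrow> rat) \<times> (nat \<Rightarrow> rat)) set" where
  "padic_rel p = {(u, w). padic_cauchy p u \<and> padic_cauchy p w \<and> padic_null p (\<lambda>n. u n - w n)}"

definition padic_class :: "nat \<Rightarrow> (nat \<Rightarrow> rat) \<Rightarrow> (nat \<Rightarrow> rat) set" where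
  "padic_class p u = padic_rel p `` {u}"

definition Qp :: "nat \<Rightarrow> (nat \<Rightarrow> rat) set ring" where
  "Qp p = \<lparr> carrier = {u. padic_cauchy p u} // padic_rel p,
            monoid.mult = (\<lambda>A B. padic_class p (\<lambda>n. (SOME u. u \<in> A) n * (SOME w. w \<in> B) n)),
            one = padic_class p (\<lambda>_. 1),
            zero = padic_class p (\<lambda>_. 0),
            add = (\<lambda>A B. padic_class p (\<lambda>n. (SOME u. u \<in> A) n + (SOME w. w \<in> B) n)) \<rparr>"

text \<open>Z_p: the closure of Z in Q_p (classes with an integer-valued representative).\<close>
definition Zp :: "nat \<Rightarrow> (nat \<Rightarrow> rat) set set" where
  "Zp p = {A \<in> carrier (Qp p). \<exists>u\<in>A. \<forall>n. u n \<in> \<int>}"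

type_synonym qbar = "(((nat \<Rightarrow> rat) set list \<times> nat) multiset \<Rightarrow> (nat \<Rightarrow> rat) set)"

definition Qpbar :: "nat \<Rightarrow> qbar ring" where
  "Qpbar p = field.alg_closure (Qp p)"

definition emb :: "nat \<Rightarrow> (nat \<Rightarrow> rat) set \<Rightarrow> qbar" where
  "emb p = ring.indexed_const (Qp p)"

text \<open>Elements of the algebraic closure that are integral over Z_p (roots of a monic polynomial
  with coefficients in Z_p; polynomials are HOL-Algebra coefficient lists, leading coefficient first).\<close>
definition Zpbar :: "nat \<Rightarrow> qbar set" where
  "Zpbar p = {x \<in> carrier (Qpbar p). \<exists>q. q \<noteq> [] \<and> hd q = \<one>\<^bsub>Qpbar p\<^esub> \<and>
       set (tl q) \<subseteq> emb p ` Zp p \<and> ring.eval (Qpbar p) q x = \<zero>\<^bsub>Qpbar p\<^esub>}"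

definition rat_to_Qpbar :: "nat \<Rightarrow> rat \<Rightarrow> qbar" where
  "rat_to_Qpbar p r = emb p (padic_class p (\<lambda>_. r))"

definition qeval :: "nat \<Rightarrow> rat poly \<Rightarrow> qbar \<Rightarrow> qbar" where
  "qeval p f \<alpha> = finsum (Qpbar p)
      (\<lambda>i. rat_to_Qpbar p (coeff f i) \<otimes>\<^bsub>Qpbar p\<^esub> (\<alpha> [^]\<^bsub>Qpbar p\<^esub> i)) {..degree f}"

definition IntQ :: "nat \<Rightarrow> qbar set \<Rightarrow> rat poly set" where
  "IntQ p E = {f. \<forall>\<alpha>\<in>E. qeval p f \<alpha> \<in> Zpbar p}"

definition IntQ_family :: "(nat \<Rightarrow> qbar set) \<Rightarrow> rat poly set" where
  "IntQ_family E = {f. \<forall>p. prime p \<longrightarrow> f \<in> IntQ p (E p)}"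

inductive_set mult_gen :: "nat set \<Rightarrow> int set" for P :: "nat set" where
  one: "1 \<in> mult_gen P"
| step: "prime q \<Longrightarrow> q \<notin> P \<Longrightarrow> s \<in> mult_gen P \<Longrightarrow> int q * s \<in> mult_gen P"

definition loc :: "int set \<Rightarrow> rat poly set \<Rightarrow> rat poly set" where
  "loc S A = {smult (1 / of_int s) g | g s. g \<in> A \<and> s \<in> S}"

end

(*
  An element s of S is a unit of Z_p for every p in P, and the product of an element of
  Z_p with an element of Zbar_p lies in Zbar_p; hence S^-1 R lies in the intersection.
  Conversely, let f lie in the intersection and clear the denominators of f at the primes
  outside P by some s in S. For q outside P the coefficients of s f then lie in Z_q, so for
  alpha in E_q the value (s f)(alpha) lies in Z_q[alpha], all of whose elements are integral
  over Z_q by the determinant trick; for p in P, (s f)(alpha) = s f(alpha) lies in Zbar_p as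
  before. So f = (s f)/s lies in S^-1 R. The second statement is the case P = {p}, where S may
  be enlarged to all integers prime to p.
*)

theory Submission
  imports Defs "Jordan_Normal_Form.Char_Poly"
begin

section \<open>Integrality over a subring via the determinant trick\<close>

lemma det_mult_eq_0_if_mult_mat_vec_eq_0:
  fixes B :: "'a::comm_ring_1 mat" and v :: "'a vec"
  assumes B: "B \<in> carrier_mat n n" and v: "v \<in> carrier_vec n"
    and Bv: "B *\<^sub>v v = 0\<^sub>v n" and k: "k < n"
  shows "det B * v $ k = 0"
proof -
  have "(det B \<cdot>\<^sub>m 1\<^sub>m n) *\<^sub>v v = (adj_mat B * B) *\<^sub>v v"
    using adj_mat[OF B] by simp
  also have "\<dots> = adj_mat B *\<^sub>v (B *\<^sub>v v)"
    using adj_mat(1)[OF B] B v by simp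
  also have "\<dots> = 0\<^sub>v n"
    unfolding Bv using adj_mat(1)[OF B] by (intro eq_vecI) auto
  finally have "((det B \<cdot>\<^sub>m 1\<^sub>m n) *\<^sub>v v) $ k = 0"
    using k by simp
  moreover have "((det B \<cdot>\<^sub>m 1\<^sub>m n) *\<^sub>v v) $ k = det B * v $ k"
    using k v by (simp add: scalar_prod_def if_distrib if_distribR sum.delta cong: if_cong)
  ultimately show ?thesis by simp
qed

lemma det_trick:
  fixes y :: "'a::comm_ring_1" and v :: "nat \<Rightarrow> 'a" and m :: "nat \<Rightarrow> nat \<Rightarrow> 'a"
  assumes eq: "\<And>i. i < n \<Longrightarrow> y * v i = (\<Sum>j<n. m i j * v j)" and k: "k < n"
  shows "poly (char_poly (mat n n (\<lambda>(i, j). m i j))) y * v k = 0"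
proof -
  define M where "M = mat n n (\<lambda>(i, j). m i j)"
  define B where "B = map_mat (\<lambda>q. poly q y) (char_poly_matrix M)"
  have B: "B \<in> carrier_mat n n"
    unfolding B_def M_def by simp
  have "det B = poly (char_poly M) y"
    unfolding B_def char_poly_def by (rule comm_ring_hom.hom_det) (unfold_locales, auto)
  moreover have "B *\<^sub>v vec n v = 0\<^sub>v n"
  proof (rule eq_vecI)
    fix i assume "i < dim_vec (0\<^sub>v n :: 'a vec)"
    hence i: "i < n" by simp
    have "(B *\<^sub>v vec n v) $ i = (\<Sum>j<n. ((if i = j then y else 0) - m i j) * v j)"
      using i B unfolding B_def M_def
      by (auto simp: scalar_prod_def char_poly_matrix_def atLeast0LessThan intro!: sum.cong)
    also have "\<dots> = y * v i - (\<Sum>j<n. m i j * v j)"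
      using i by (simp add: left_diff_distrib sum_subtractf)
        (simp add: if_distrib if_distribR sum.delta cong: if_cong)
    finally show "(B *\<^sub>v vec n v) $ i = 0\<^sub>v n $ i"
      using eq[OF i] i by simp
  qed (use B in simp)
  ultimately show ?thesis
    using det_mult_eq_0_if_mult_mat_vec_eq_0[OF B _ _ k, of "vec n v"] k unfolding M_def by simp
qed

definition polys_over :: "'a::zero set \<Rightarrow> 'a poly set" where
  "polys_over S = {q. \<forall>i. coeff q i \<in> S}"

definition integral_over :: "'a::comm_ring_1 set \<Rightarrow> 'a \<Rightarrow> bool" where
  "integral_over S y \<longleftrightarrow> (\<exists>Q. lead_coeff Q = 1 \<and> Q \<in> polys_over S \<and> poly Q y = 0)"

text \<open>Leading coefficient first, mirroring \<^const>\<open>ring.eval\<close> on HOL-Algebra polynomials.\<close>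
primrec list_eval :: "'a::comm_ring_1 list \<Rightarrow> 'a \<Rightarrow> 'a" where
  "list_eval [] y = 0"
| "list_eval (c # cs) y = c * y ^ length cs + list_eval cs y"

lemma list_eval_rev_map_upt: "list_eval (rev (map f [0..<m])) y = (\<Sum>i<m. f i * y ^ i)"
  by (induction m) (simp_all add: add.commute)

lemma poly_eq_list_eval: "poly Q y = list_eval (rev (map (coeff Q) [0..<Suc (degree Q)])) y"
  unfolding list_eval_rev_map_upt poly_altdef by (simp add: lessThan_Suc_atMost)

locale comm_subring =
  fixes S :: "'a::comm_ring_1 set"
  assumes zero_mem [simp]: "0 \<in> S" and one_mem [simp]: "1 \<in> S"
    and add_mem [intro]: "a \<in> S \<Longrightarrow> b \<in> S \<Longrightarrow> a + b \<in> S"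
    and mult_mem [intro]: "a \<in> S \<Longrightarrow> b \<in> S \<Longrightarrow> a * b \<in> S"
    and uminus_mem [intro]: "a \<in> S \<Longrightarrow> - a \<in> S"
begin

lemma sum_mem: "(\<And>i. i \<in> A \<Longrightarrow> f i \<in> S) \<Longrightarrow> sum f A \<in> S"
  by (induction A rule: infinite_finite_induct) auto

lemma prod_mem: "(\<And>i. i \<in> A \<Longrightarrow> f i \<in> S) \<Longrightarrow> prod f A \<in> S"
  by (induction A rule: infinite_finite_induct) auto

lemma comm_subring_polys_over: "comm_subring (polys_over S)"
  by unfold_locales (auto simp: polys_over_def coeff_mult coeff_1 intro!: sum_mem)

lemma char_poly_in_polys_over:
  assumes m: "\<And>i j. i < n \<Longrightarrow> j < n \<Longrightarrow> m i j \<in> S"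
  shows "char_poly (mat n n (\<lambda>(i, j). m i j)) \<in> polys_over S"
proof -
  interpret P: comm_subring "polys_over S" by (rule comm_subring_polys_over)
  define C where "C = char_poly_matrix (mat n n (\<lambda>(i, j). m i j))"
  have C: "C \<in> carrier_mat n n"
    unfolding C_def by simp
  have entries: "C $$ (i, j) \<in> polys_over S" if "i < n" "j < n" for i j
    using that m by (auto simp: C_def char_poly_matrix_def polys_over_def coeff_pCons
        split: nat.split)
  have "signof \<pi> * (\<Prod>i = 0..<n. C $$ (i, \<pi> i)) \<in> polys_over S" if "\<pi> permutes {0..<n}" for \<pi>
    using that by (auto simp: sign_def permutes_in_image intro!: P.mult_mem P.prod_mem entries)
  thus ?thesis
    unfolding char_poly_def C_def[symmetric] det_def'[OF C] by (auto intro: P.sum_mem)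
qed

definition pow_span :: "nat \<Rightarrow> 'a \<Rightarrow> 'a set" where
  "pow_span n a = {\<Sum>i<n. c i * a ^ i | c. \<forall>i. c i \<in> S}"

lemma pow_span_0: "0 \<in> pow_span n a"
  unfolding pow_span_def by (auto intro!: exI[of _ "\<lambda>_. 0"])

lemma pow_span_add:
  assumes "x \<in> pow_span n a" and "z \<in> pow_span n a"
  shows "x + z \<in> pow_span n a"
proof -
  obtain c d where "\<forall>i. c i \<in> S" "x = (\<Sum>i<n. c i * a ^ i)"
    and "\<forall>i. d i \<in> S" "z = (\<Sum>i<n. d i * a ^ i)"
    using assms unfolding pow_span_def by blast
  thus ?thesis
    unfolding pow_span_def
    by (auto simp: sum.distrib[symmetric] distrib_right intro!: exI[of _ "\<lambda>i. c i + d i"])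
qed

lemma pow_span_mult:
  assumes "s \<in> S" and "x \<in> pow_span n a"
  shows "s * x \<in> pow_span n a"
proof -
  obtain c where "\<forall>i. c i \<in> S" "x = (\<Sum>i<n. c i * a ^ i)"
    using assms unfolding pow_span_def by blast
  thus ?thesis
    unfolding pow_span_def using assms(1)
    by (auto simp: sum_distrib_left mult.assoc intro!: exI[of _ "\<lambda>i. s * c i"])
qed

lemma pow_span_sum: "(\<And>i. i \<in> A \<Longrightarrow> f i \<in> pow_span n a) \<Longrightarrow> sum f A \<in> pow_span n a"
  by (induction A rule: infinite_finite_induct) (auto intro: pow_span_0 pow_span_add)

lemma pow_span_power_less: "k < n \<Longrightarrow> a ^ k \<in> pow_span n a"
  unfolding pow_span_def
  by (auto simp: if_distrib if_distribR sum.delta cong: if_cong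
      intro!: exI[of _ "\<lambda>i. if i = k then 1 else 0"])

lemma pow_span_power:
  assumes an: "a ^ n \<in> pow_span n a"
  shows "a ^ k \<in> pow_span n a"
proof (induction k rule: less_induct)
  case (less k)
  show ?case
  proof (cases "k < n")
    case True
    thus ?thesis by (rule pow_span_power_less)
  next
    case False
    obtain c where c: "\<forall>i. c i \<in> S" "a ^ n = (\<Sum>i<n. c i * a ^ i)"
      using an unfolding pow_span_def by blast
    have "a ^ k = a ^ (k - n) * a ^ n"
      using False by (simp flip: power_add)
    also have "\<dots> = (\<Sum>i<n. c i * a ^ (k - n + i))"
      unfolding c(2) by (simp add: sum_distrib_left power_add algebra_simps)
    also have "\<dots> \<in> pow_span n a"
      using False c(1) by (intro pow_span_sum pow_span_mult less) auto
    finally show ?thesis .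
  qed
qed

lemma list_eval_in_pow_span:
  assumes "set cs \<subseteq> S" and "length cs \<le> n"
  shows "list_eval cs y \<in> pow_span n y"
  using assms
proof (induction cs)
  case Nil
  show ?case by (simp add: pow_span_0)
next
  case (Cons c cs)
  hence "c * y ^ length cs \<in> pow_span n y"
    by (intro pow_span_mult pow_span_power_less) auto
  with Cons show ?case
    by (simp add: pow_span_add)
qed

text \<open>The determinant trick: multiplication by \<open>y \<in> S[a]\<close> on the spanning set
  \<open>1, a, \<dots>, a^(n-1)\<close> has a matrix over \<open>S\<close>, whose characteristic polynomial kills \<open>y\<close>.\<close>
lemma integral_over_sum_power:
  assumes n: "1 \<le> n" and an: "a ^ n \<in> pow_span n a" and g: "\<And>i. g i \<in> S"
  shows "integral_over S (\<Sum>i\<le>d. g i * a ^ i)"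
proof -
  define y where "y = (\<Sum>i\<le>d. g i * a ^ i)"
  have "\<exists>c. (\<forall>i. c i \<in> S) \<and> y * a ^ j = (\<Sum>i<n. c i * a ^ i)" for j
  proof -
    have "y * a ^ j = (\<Sum>i\<le>d. g i * a ^ (i + j))"
      unfolding y_def by (simp add: sum_distrib_right power_add mult.assoc)
    also have "\<dots> \<in> pow_span n a"
      by (intro pow_span_sum pow_span_mult g pow_span_power[OF an])
    finally show ?thesis
      unfolding pow_span_def by blast
  qed
  then obtain m where m: "\<And>j i. m j i \<in> S" "\<And>j. y * a ^ j = (\<Sum>i<n. m j i * a ^ i)"
    by metis
  define Q where "Q = char_poly (mat n n (\<lambda>(i, j). m i j))"
  have "poly Q y * a ^ 0 = 0"
    unfolding Q_def by (rule det_trick) (use m n in auto)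
  moreover have "lead_coeff Q = 1"
    unfolding Q_def using degree_monic_char_poly[of "mat n n (\<lambda>(i, j). m i j)" n] by simp
  moreover have "Q \<in> polys_over S"
    unfolding Q_def by (rule char_poly_in_polys_over) (use m in auto)
  ultimately show ?thesis
    unfolding integral_over_def y_def by auto
qed

lemma integral_over_mult:
  assumes "1 \<le> n" and "a ^ n \<in> pow_span n a" and "s \<in> S"
  shows "integral_over S (s * a)"
  using integral_over_sum_power[OF assms(1,2), of "\<lambda>i. if i = 1 then s else 0" 1] assms(3)
  by simp

end

section \<open>The \<open>p\<close>-adic valuation on \<open>\<rat>\<close>\<close>

lemma multiplicity_add_ge:
  fixes p :: "'a::factorial_semiring"
  assumes "x + y \<noteq> 0" and "\<not> is_unit p"
  shows "min (multiplicity p x) (multiplicity p y) \<le> multiplicity p (x + y)"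
proof -
  let ?m = "min (multiplicity p x) (multiplicity p y)"
  have "p ^ ?m dvd x" and "p ^ ?m dvd y"
    by (simp_all add: multiplicity_dvd')
  thus ?thesis
    using assms by (intro multiplicity_geI) auto
qed

abbreviation int_vp :: "nat \<Rightarrow> int \<Rightarrow> int" where
  "int_vp p a \<equiv> int (multiplicity (int p) a)"

lemma int_vp_mult: "prime p \<Longrightarrow> a \<noteq> 0 \<Longrightarrow> b \<noteq> 0 \<Longrightarrow> int_vp p (a * b) = int_vp p a + int_vp p b"
  by (simp add: prime_elem_multiplicity_mult_distrib prime_imp_prime_elem)

lemma rat_as_int_fraction:
  fixes x :: rat
  obtains a b :: int where "b > 0" and "x = of_int a / of_int b"
  using quotient_of_denom_pos quotient_of_div by (metis surj_pair)

lemma rat_vp_frac: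
  assumes p: "prime p" and a: "a \<noteq> 0" and b: "b \<noteq> 0"
  shows "rat_vp p (of_int a / of_int b) = int_vp p a - int_vp p b"
proof -
  obtain a' b' where q: "quotient_of (of_int a / of_int b) = (a', b')"
    by (metis surj_pair)
  have b': "b' > 0"
    using quotient_of_denom_pos[OF q] .
  have "(of_int a / of_int b :: rat) = of_int a' / of_int b'"
    using quotient_of_div[OF q] .
  hence "of_int (a * b') = (of_int (a' * b) :: rat)"
    using b b' by (simp add: field_simps)
  hence cross: "a * b' = a' * b"
    by (simp only: of_int_eq_iff)
  hence "a' \<noteq> 0"
    using a b' by auto
  hence "int_vp p a + int_vp p b' = int_vp p a' + int_vp p b"
    using int_vp_mult[OF p a, of b'] int_vp_mult[OF p _ b, of a'] cross b' by simp
  thus ?thesis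
    unfolding rat_vp_def q by simp
qed

lemma rat_vp_0 [simp]: "rat_vp p 0 = 0"
  by (simp add: rat_vp_def)

lemma rat_vp_1 [simp]: "rat_vp p 1 = 0"
  by (simp add: rat_vp_def)

lemma rat_vp_uminus [simp]: "rat_vp p (- x) = rat_vp p x"
proof -
  have "quotient_of (- x) = (case quotient_of x of (a, b) \<Rightarrow> (- a, b))"
    by (simp add: rat_uminus_code)
  thus ?thesis
    unfolding rat_vp_def by (auto split: prod.splits)
qed

context
  fixes p :: nat
  assumes p: "prime p"
begin

lemma rat_vp_mult:
  assumes "x \<noteq> 0" and "y \<noteq> 0"
  shows "rat_vp p (x * y) = rat_vp p x + rat_vp p y"
proof -
  obtain a b where b: "b > 0" and x: "x = of_int a / of_int b"
    by (rule rat_as_int_fraction)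
  obtain c d where d: "d > 0" and y: "y = of_int c / of_int d"
    by (rule rat_as_int_fraction)
  have "a \<noteq> 0" and "c \<noteq> 0"
    using assms x y by auto
  have xy: "x * y = of_int (a * c) / of_int (b * d)"
    using x y by simp
  have "rat_vp p (x * y) = int_vp p (a * c) - int_vp p (b * d)"
    unfolding xy by (rule rat_vp_frac[OF p]) (use \<open>a \<noteq> 0\<close> \<open>c \<noteq> 0\<close> b d in auto)
  moreover have "rat_vp p x = int_vp p a - int_vp p b" and "rat_vp p y = int_vp p c - int_vp p d"
    using \<open>a \<noteq> 0\<close> \<open>c \<noteq> 0\<close> b d unfolding x y by (simp_all add: rat_vp_frac[OF p])
  ultimately show ?thesis
    using \<open>a \<noteq> 0\<close> \<open>c \<noteq> 0\<close> b d by (simp add: int_vp_mult[OF p])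
qed

lemma rat_vp_inverse: "x \<noteq> 0 \<Longrightarrow> rat_vp p (inverse x) = - rat_vp p x"
  using rat_vp_mult[of x "inverse x"] by (simp add: rat_vp_def)

lemma rat_vp_add_ge:
  assumes "x \<noteq> 0" and "y \<noteq> 0" and "x + y \<noteq> 0"
  shows "min (rat_vp p x) (rat_vp p y) \<le> rat_vp p (x + y)"
proof -
  obtain a b where b: "b > 0" and x: "x = of_int a / of_int b"
    by (rule rat_as_int_fraction)
  obtain c d where d: "d > 0" and y: "y = of_int c / of_int d"
    by (rule rat_as_int_fraction)
  have a: "a \<noteq> 0" and c: "c \<noteq> 0"
    using assms x y by auto
  have sum: "x + y = of_int (a * d + c * b) / of_int (b * d)"
    using x y b d by (simp add: field_simps)
  hence num: "a * d + c * b \<noteq> 0"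
    using assms(3) by (metis div_0 of_int_0)
  moreover have "\<not> is_unit (int p)"
    using prime_gt_1_nat[OF p] by simp
  ultimately have "min (int_vp p (a * d)) (int_vp p (c * b)) \<le> int_vp p (a * d + c * b)"
    using multiplicity_add_ge[of "a * d" "c * b" "int p"] by linarith
  moreover have "rat_vp p (x + y) = int_vp p (a * d + c * b) - int_vp p (b * d)"
    unfolding sum by (rule rat_vp_frac[OF p num]) (use b d in auto)
  moreover have "rat_vp p x = int_vp p a - int_vp p b" and "rat_vp p y = int_vp p c - int_vp p d"
    using a c b d unfolding x y by (simp_all add: rat_vp_frac[OF p])
  ultimately show ?thesis
    using a b c d by (simp add: int_vp_mult[OF p])
qed

end

section \<open>Cauchy sequences and the field \<open>\<rat>\<^sub>p\<close>\<close>

text \<open>\<open>vp_ge p k x\<close> states \<open>v\<^sub>p(x) \<ge> k\<close>, with the convention \<open>v\<^sub>p(0) = \<infinity>\<close>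
  (\<^const>\<open>rat_vp\<close> itself sends \<open>0\<close> to \<open>0\<close>).\<close>
definition vp_ge :: "nat \<Rightarrow> int \<Rightarrow> rat \<Rightarrow> bool" where
  "vp_ge p k x \<longleftrightarrow> x = 0 \<or> k \<le> rat_vp p x"

lemma padic_cauchy_iff:
  "padic_cauchy p u \<longleftrightarrow> (\<forall>k. \<exists>N. \<forall>m n. N \<le> m \<longrightarrow> N \<le> n \<longrightarrow> vp_ge p k (u m - u n))"
  unfolding padic_cauchy_def vp_ge_def by simp

lemma padic_null_iff: "padic_null p u \<longleftrightarrow> (\<forall>k. \<exists>N. \<forall>n\<ge>N. vp_ge p k (u n))"
  unfolding padic_null_def vp_ge_def by simp

lemma vp_ge_0 [simp]: "vp_ge p k 0"
  by (simp add: vp_ge_def)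

lemma vp_ge_uminus [simp]: "vp_ge p k (- x) \<longleftrightarrow> vp_ge p k x"
  by (simp add: vp_ge_def)

lemma vp_ge_mono: "j \<le> k \<Longrightarrow> vp_ge p k x \<Longrightarrow> vp_ge p j x"
  by (auto simp: vp_ge_def)

context
  fixes p :: nat
  assumes p: "prime p"
begin

lemma vp_ge_add: "vp_ge p k x \<Longrightarrow> vp_ge p k y \<Longrightarrow> vp_ge p k (x + y)"
  using rat_vp_add_ge[OF p, of x y] by (fastforce simp: vp_ge_def)

lemma vp_ge_diff: "vp_ge p k x \<Longrightarrow> vp_ge p k y \<Longrightarrow> vp_ge p k (x - y)"
  using vp_ge_add[of k x "- y"] by simp

lemma vp_ge_mult: "vp_ge p k x \<Longrightarrow> vp_ge p j y \<Longrightarrow> vp_ge p (k + j) (x * y)"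
  by (cases "x = 0 \<or> y = 0") (auto simp: vp_ge_def rat_vp_mult[OF p])

lemma rat_vp_add_eq:
  assumes "x \<noteq> 0" and "vp_ge p k y" and "rat_vp p x < k"
  shows "x + y \<noteq> 0 \<and> rat_vp p (x + y) = rat_vp p x"
proof (cases "y = 0")
  case False
  with assms have ky: "k \<le> rat_vp p y"
    by (simp add: vp_ge_def)
  have "x + y \<noteq> 0"
  proof
    assume "x + y = 0"
    hence "y = - x" by simp
    thus False using ky assms(3) by simp
  qed
  moreover have "rat_vp p x \<le> rat_vp p (x + y)"
    using rat_vp_add_ge[OF p assms(1) False \<open>x + y \<noteq> 0\<close>] ky assms(3) by simp
  moreover have "rat_vp p (x + y) \<le> rat_vp p x"
    using rat_vp_add_ge[OF p \<open>x + y \<noteq> 0\<close>, of "- y"] ky assms False by fastforce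
  ultimately show ?thesis by simp
qed (use assms in simp)

lemma padic_null_add: "padic_null p u \<Longrightarrow> padic_null p w \<Longrightarrow> padic_null p (\<lambda>n. u n + w n)"
  unfolding padic_null_iff
proof
  fix k
  assume "\<forall>k. \<exists>N. \<forall>n\<ge>N. vp_ge p k (u n)" and "\<forall>k. \<exists>N. \<forall>n\<ge>N. vp_ge p k (w n)"
  then obtain N1 N2 where "\<forall>n\<ge>N1. vp_ge p k (u n)" and "\<forall>n\<ge>N2. vp_ge p k (w n)"
    by blast
  thus "\<exists>N. \<forall>n\<ge>N. vp_ge p k (u n + w n)"
    by (intro exI[of _ "max N1 N2"]) (simp add: vp_ge_add)
qed

lemma padic_null_uminus: "padic_null p u \<Longrightarrow> padic_null p (\<lambda>n. - u n)"
  unfolding padic_null_iff by simp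

lemma padic_null_eventually_0: "\<forall>n\<ge>N. u n = 0 \<Longrightarrow> padic_null p u"
  unfolding padic_null_iff by (metis vp_ge_0)

lemma padic_cauchy_const: "padic_cauchy p (\<lambda>n. c)"
  unfolding padic_cauchy_iff by simp

lemma padic_cauchy_add:
  assumes "padic_cauchy p u" and "padic_cauchy p w"
  shows "padic_cauchy p (\<lambda>n. u n + w n)"
  unfolding padic_cauchy_iff
proof
  fix k
  obtain N1 N2 where "\<forall>m n. N1 \<le> m \<longrightarrow> N1 \<le> n \<longrightarrow> vp_ge p k (u m - u n)"
    and "\<forall>m n. N2 \<le> m \<longrightarrow> N2 \<le> n \<longrightarrow> vp_ge p k (w m - w n)"
    using assms unfolding padic_cauchy_iff by meson
  hence "vp_ge p k (u m + w m - (u n + w n))" if "max N1 N2 \<le> m" "max N1 N2 \<le> n" for m n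
    using vp_ge_add[of k "u m - u n" "w m - w n"] that by (simp add: algebra_simps)
  thus "\<exists>N. \<forall>m n. N \<le> m \<longrightarrow> N \<le> n \<longrightarrow> vp_ge p k (u m + w m - (u n + w n))"
    by blast
qed

lemma padic_cauchy_uminus: "padic_cauchy p u \<Longrightarrow> padic_cauchy p (\<lambda>n. - u n)"
  unfolding padic_cauchy_iff by (metis minus_diff_eq minus_diff_minus vp_ge_uminus)

lemma padic_null_imp_cauchy: "padic_null p u \<Longrightarrow> padic_cauchy p u"
  unfolding padic_cauchy_iff padic_null_iff
proof
  fix k
  assume "\<forall>k. \<exists>N. \<forall>n\<ge>N. vp_ge p k (u n)"
  then obtain N where "\<forall>n\<ge>N. vp_ge p k (u n)"
    by blast
  thus "\<exists>N. \<forall>m n. N \<le> m \<longrightarrow> N \<le> n \<longrightarrow> vp_ge p k (u m - u n)"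
    by (auto intro: vp_ge_diff)
qed

lemma padic_cauchy_bounded:
  assumes "padic_cauchy p u"
  obtains B where "\<And>n. vp_ge p B (u n)"
proof -
  obtain N where N: "\<forall>m n. N \<le> m \<longrightarrow> N \<le> n \<longrightarrow> vp_ge p 0 (u m - u n)"
    using assms unfolding padic_cauchy_iff by blast
  define B where "B = Min (insert 0 ((\<lambda>n. rat_vp p (u n)) ` {..N}))"
  have "B \<le> 0"
    unfolding B_def by simp
  have B: "B \<le> rat_vp p (u n)" if "n \<le> N" for n
    unfolding B_def using that by (intro Min_le) auto
  have "vp_ge p B (u n)" for n
  proof (cases "n \<le> N")
    case True
    thus ?thesis using B by (simp add: vp_ge_def)
  next
    case False
    hence "vp_ge p B (u n - u N)"
      using N vp_ge_mono[OF \<open>B \<le> 0\<close>] by simp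
    moreover have "vp_ge p B (u N)"
      using B by (simp add: vp_ge_def)
    ultimately show ?thesis
      using vp_ge_add by fastforce
  qed
  thus thesis by (rule that)
qed

lemma padic_null_mult_bounded:
  assumes "padic_null p u" and "\<And>n. vp_ge p B (w n)"
  shows "padic_null p (\<lambda>n. u n * w n)"
  unfolding padic_null_iff
proof
  fix k
  obtain N where "\<forall>n\<ge>N. vp_ge p (k - B) (u n)"
    using assms(1) unfolding padic_null_iff by blast
  hence "\<forall>n\<ge>N. vp_ge p (k - B + B) (u n * w n)"
    using assms(2) vp_ge_mult by blast
  thus "\<exists>N. \<forall>n\<ge>N. vp_ge p k (u n * w n)"
    by auto
qed

lemma padic_cauchy_mult:
  assumes u: "padic_cauchy p u" and w: "padic_cauchy p w"
  shows "padic_cauchy p (\<lambda>n. u n * w n)"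
  unfolding padic_cauchy_iff
proof
  fix k
  obtain Bu Bw where Bu: "\<And>n. vp_ge p Bu (u n)" and Bw: "\<And>n. vp_ge p Bw (w n)"
    using padic_cauchy_bounded[OF u] padic_cauchy_bounded[OF w] by metis
  obtain N1 N2 where N1: "\<forall>m n. N1 \<le> m \<longrightarrow> N1 \<le> n \<longrightarrow> vp_ge p (k - Bw) (u m - u n)"
    and N2: "\<forall>m n. N2 \<le> m \<longrightarrow> N2 \<le> n \<longrightarrow> vp_ge p (k - Bu) (w m - w n)"
    using u w unfolding padic_cauchy_iff by meson
  have "vp_ge p k (u m * w m - u n * w n)" if "max N1 N2 \<le> m" "max N1 N2 \<le> n" for m n
  proof -
    have "vp_ge p (Bu + (k - Bu)) (u m * (w m - w n))"
      using Bu N2 that by (intro vp_ge_mult) auto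
    moreover have "vp_ge p ((k - Bw) + Bw) ((u m - u n) * w n)"
      using Bw N1 that by (intro vp_ge_mult) auto
    ultimately have "vp_ge p k (u m * (w m - w n) + (u m - u n) * w n)"
      by (intro vp_ge_add) auto
    thus ?thesis
      by (simp add: algebra_simps)
  qed
  thus "\<exists>N. \<forall>m n. N \<le> m \<longrightarrow> N \<le> n \<longrightarrow> vp_ge p k (u m * w m - u n * w n)"
    by blast
qed

lemma padic_cauchy_eventually_rat_vp_const:
  assumes u: "padic_cauchy p u" and "\<not> padic_null p u"
  obtains k N where "\<forall>n\<ge>N. u n \<noteq> 0 \<and> rat_vp p (u n) = k"
proof -
  obtain K where K: "\<forall>N. \<exists>n\<ge>N. \<not> vp_ge p K (u n)"
    using assms(2) unfolding padic_null_iff by blast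
  obtain N where N: "\<forall>m n. N \<le> m \<longrightarrow> N \<le> n \<longrightarrow> vp_ge p K (u m - u n)"
    using u unfolding padic_cauchy_iff by blast
  obtain n0 where "n0 \<ge> N" and "\<not> vp_ge p K (u n0)"
    using K by blast
  hence "u n0 \<noteq> 0" and "rat_vp p (u n0) < K"
    by (auto simp: vp_ge_def)
  have "u n \<noteq> 0 \<and> rat_vp p (u n) = rat_vp p (u n0)" if "N \<le> n" for n
    using rat_vp_add_eq[OF \<open>u n0 \<noteq> 0\<close> _ \<open>rat_vp p (u n0) < K\<close>, of "u n - u n0"]
      N that \<open>n0 \<ge> N\<close> by simp
  thus thesis
    using that by blast
qed

lemma padic_cauchy_inverse:
  assumes u: "padic_cauchy p u" and nn: "\<not> padic_null p u"
  shows "padic_cauchy p (\<lambda>n. inverse (u n))"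
    and "padic_null p (\<lambda>n. u n * inverse (u n) - 1)"
proof -
  obtain k N where kN: "\<forall>n\<ge>N. u n \<noteq> 0 \<and> rat_vp p (u n) = k"
    using padic_cauchy_eventually_rat_vp_const[OF u nn] by blast
  thus "padic_null p (\<lambda>n. u n * inverse (u n) - 1)"
    by (intro padic_null_eventually_0[of N]) auto
  show "padic_cauchy p (\<lambda>n. inverse (u n))"
    unfolding padic_cauchy_iff
  proof
    fix j
    obtain N1 where N1: "\<forall>m n. N1 \<le> m \<longrightarrow> N1 \<le> n \<longrightarrow> vp_ge p (j + 2 * k) (u n - u m)"
      using u unfolding padic_cauchy_iff by blast
    have "vp_ge p j (inverse (u m) - inverse (u n))" if "max N N1 \<le> m" "max N N1 \<le> n" for m n
    proof -
      have um: "u m \<noteq> 0" "rat_vp p (u m) = k" and un: "u n \<noteq> 0" "rat_vp p (u n) = k"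
        using kN that by auto
      have "vp_ge p (- k + - k) (inverse (u m) * inverse (u n))"
        using um un by (intro vp_ge_mult) (auto simp: vp_ge_def rat_vp_inverse[OF p])
      moreover have "vp_ge p (j + 2 * k) (u n - u m)"
        using N1 that by simp
      ultimately have "vp_ge p ((j + 2 * k) + (- k + - k)) ((u n - u m) * (inverse (u m) * inverse (u n)))"
        using vp_ge_mult by blast
      moreover have "inverse (u m) - inverse (u n) = (u n - u m) * (inverse (u m) * inverse (u n))"
        using um un by (simp add: field_simps)
      ultimately show ?thesis
        by simp
    qed
    thus "\<exists>N. \<forall>m n. N \<le> m \<longrightarrow> N \<le> n \<longrightarrow> vp_ge p j (inverse (u m) - inverse (u n))"
      by blast
  qed
qed

lemma equiv_padic_rel: "equiv {u. padic_cauchy p u} (padic_rel p)"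
proof (rule equivI)
  show "refl_on {u. padic_cauchy p u} (padic_rel p)"
    by (rule refl_onI) (auto simp: padic_rel_def padic_null_iff)
  show "sym (padic_rel p)"
    using padic_null_uminus by (intro symI) (fastforce simp: padic_rel_def)
  show "trans (padic_rel p)"
    using padic_null_add by (intro transI) (fastforce simp: padic_rel_def)
qed (auto simp: padic_rel_def)

lemma padic_class_eq_iff:
  "padic_cauchy p u \<Longrightarrow> padic_cauchy p w \<Longrightarrow>
     padic_class p u = padic_class p w \<longleftrightarrow> padic_null p (\<lambda>n. u n - w n)"
  unfolding padic_class_def using equiv_class_eq_iff[OF equiv_padic_rel, of u w]
  by (simp add: padic_rel_def)

lemma padic_class_in_carrier: "padic_cauchy p u \<Longrightarrow> padic_class p u \<in> carrier (Qp p)"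
  unfolding Qp_def padic_class_def by (simp add: quotientI)

lemma Qp_carrier_cases:
  assumes "A \<in> carrier (Qp p)"
  obtains u where "padic_cauchy p u" and "A = padic_class p u"
  using assms unfolding Qp_def padic_class_def by (auto elim!: quotientE)

lemma padic_class_some:
  assumes "padic_cauchy p u"
  shows "padic_cauchy p (SOME w. w \<in> padic_class p u)"
    and "padic_null p (\<lambda>n. (SOME w. w \<in> padic_class p u) n - u n)"
proof -
  have "u \<in> padic_class p u"
    using assms by (simp add: padic_class_def padic_rel_def padic_null_iff)
  hence "(SOME w. w \<in> padic_class p u) \<in> padic_class p u"
    by (rule someI[where P = "\<lambda>w. w \<in> padic_class p u"])
  thus "padic_cauchy p (SOME w. w \<in> padic_class p u)"
    and "padic_null p (\<lambda>n. (SOME w. w \<in> padic_class p u) n - u n)"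
    using padic_null_uminus by (fastforce simp: padic_class_def padic_rel_def)+
qed

lemma padic_class_add:
  assumes u: "padic_cauchy p u" and w: "padic_cauchy p w"
  shows "padic_class p u \<oplus>\<^bsub>Qp p\<^esub> padic_class p w = padic_class p (\<lambda>n. u n + w n)"
proof -
  define a where "a = (SOME x. x \<in> padic_class p u)"
  define b where "b = (SOME x. x \<in> padic_class p w)"
  note a = padic_class_some[OF u, folded a_def] and b = padic_class_some[OF w, folded b_def]
  have "padic_null p (\<lambda>n. (a n + b n) - (u n + w n))"
    using padic_null_add[OF a(2) b(2)] by (simp add: algebra_simps)
  hence "padic_class p (\<lambda>n. a n + b n) = padic_class p (\<lambda>n. u n + w n)"
    using padic_class_eq_iff padic_cauchy_add a b u w by simp
  thus ?thesis
    unfolding a_def b_def by (simp add: Qp_def)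
qed

lemma padic_class_mult:
  assumes u: "padic_cauchy p u" and w: "padic_cauchy p w"
  shows "padic_class p u \<otimes>\<^bsub>Qp p\<^esub> padic_class p w = padic_class p (\<lambda>n. u n * w n)"
proof -
  define a where "a = (SOME x. x \<in> padic_class p u)"
  define b where "b = (SOME x. x \<in> padic_class p w)"
  note a = padic_class_some[OF u, folded a_def] and b = padic_class_some[OF w, folded b_def]
  obtain Ba Bw where "\<And>n. vp_ge p Ba (a n)" and "\<And>n. vp_ge p Bw (w n)"
    using padic_cauchy_bounded[OF a(1)] padic_cauchy_bounded[OF w] by metis
  hence "padic_null p (\<lambda>n. (b n - w n) * a n + (a n - u n) * w n)"
    by (intro padic_null_add padic_null_mult_bounded a b)
  hence "padic_null p (\<lambda>n. a n * b n - u n * w n)"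
    by (simp add: algebra_simps)
  hence "padic_class p (\<lambda>n. a n * b n) = padic_class p (\<lambda>n. u n * w n)"
    using padic_class_eq_iff padic_cauchy_mult a b u w by simp
  thus ?thesis
    unfolding a_def b_def by (simp add: Qp_def)
qed

lemma Qp_0: "\<zero>\<^bsub>Qp p\<^esub> = padic_class p (\<lambda>_. 0)"
  and Qp_1: "\<one>\<^bsub>Qp p\<^esub> = padic_class p (\<lambda>_. 1)"
  by (simp_all add: Qp_def)

lemma cring_Qp: "cring (Qp p)"
proof (rule cringI)
  show "abelian_group (Qp p)"
  proof (rule abelian_groupI)
    fix x
    assume "x \<in> carrier (Qp p)"
    then obtain u where u: "padic_cauchy p u" "x = padic_class p u"
      by (rule Qp_carrier_cases)
    thus "\<exists>y\<in>carrier (Qp p). y \<oplus>\<^bsub>Qp p\<^esub> x = \<zero>\<^bsub>Qp p\<^esub>"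
      by (intro bexI[of _ "padic_class p (\<lambda>n. - u n)"])
        (simp_all add: Qp_0 padic_class_add padic_cauchy_uminus padic_class_in_carrier)
  qed (auto elim!: Qp_carrier_cases simp: Qp_0 padic_class_add padic_cauchy_add padic_cauchy_const
      padic_class_in_carrier add_ac)
  show "comm_monoid (Qp p)"
    by (rule comm_monoidI) (auto elim!: Qp_carrier_cases simp: Qp_1 padic_class_mult
        padic_cauchy_mult padic_cauchy_const padic_class_in_carrier mult_ac)
qed (auto elim!: Qp_carrier_cases simp: padic_class_mult padic_class_add padic_cauchy_mult
    padic_cauchy_add distrib_right)

lemma field_Qp: "field (Qp p)"
proof (rule cring.cring_fieldI2[OF cring_Qp])
  have "\<not> padic_null p (\<lambda>n. 0 - 1)"
    unfolding padic_null_iff vp_ge_def by (auto intro: exI[of _ 1])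
  thus "\<zero>\<^bsub>Qp p\<^esub> \<noteq> \<one>\<^bsub>Qp p\<^esub>"
    unfolding Qp_0 Qp_1 using padic_class_eq_iff padic_cauchy_const by blast
next
  fix x
  assume x: "x \<in> carrier (Qp p)" "x \<noteq> \<zero>\<^bsub>Qp p\<^esub>"
  obtain u where u: "padic_cauchy p u" "x = padic_class p u"
    using x(1) by (rule Qp_carrier_cases)
  hence "\<not> padic_null p u"
    using x padic_class_eq_iff[OF u(1) padic_cauchy_const] by (auto simp: Qp_0)
  note inv = padic_cauchy_inverse[OF u(1) this]
  have "x \<otimes>\<^bsub>Qp p\<^esub> padic_class p (\<lambda>n. inverse (u n)) = \<one>\<^bsub>Qp p\<^esub>"
    using u inv padic_class_eq_iff[OF padic_cauchy_mult[OF u(1) inv(1)] padic_cauchy_const]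
    by (simp add: padic_class_mult Qp_1)
  thus "\<exists>y\<in>carrier (Qp p). x \<otimes>\<^bsub>Qp p\<^esub> y = \<one>\<^bsub>Qp p\<^esub>"
    using padic_class_in_carrier[OF inv(1)] by blast
qed

lemma field_Qpbar: "field (Qpbar p)"
  unfolding Qpbar_def
  using algebraic_closure.axioms(1)[OF field.alg_closureE(1)[OF field_Qp]] .

lemma cring_Qpbar: "cring (Qpbar p)"
  using field_Qpbar by (simp add: field.axioms(1) domain.axioms(1))

lemma ring_Qpbar: "ring (Qpbar p)"
  using cring.axioms(1)[OF cring_Qpbar] .

lemma ring_hom_cring_emb: "ring_hom_cring (Qp p) (Qpbar p) (emb p)"
proof -
  have "emb p \<in> Ring.ring_hom (Qp p) (Qpbar p)"
    unfolding emb_def Qpbar_def using field.alg_closureE(2)[OF field_Qp] .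
  thus ?thesis
    using cring_Qp cring_Qpbar by (intro ring_hom_cringI) (auto simp: cring.axioms(1))
qed

lemma padic_class_uminus:
  assumes u: "padic_cauchy p u"
  shows "\<ominus>\<^bsub>Qp p\<^esub> padic_class p u = padic_class p (\<lambda>n. - u n)"
proof -
  interpret Q: cring "Qp p"
    by (rule cring_Qp)
  have "padic_class p (\<lambda>n. - u n) \<oplus>\<^bsub>Qp p\<^esub> padic_class p u = \<zero>\<^bsub>Qp p\<^esub>"
    using u by (simp add: padic_class_add padic_cauchy_uminus Qp_0)
  thus ?thesis
    using u by (intro Q.minus_equality) (simp_all add: padic_class_in_carrier padic_cauchy_uminus)
qed

lemma Zp_iff: "A \<in> Zp p \<longleftrightarrow> (\<exists>u. padic_cauchy p u \<and> (\<forall>n. u n \<in> \<int>) \<and> A = padic_class p u)"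
proof
  assume "A \<in> Zp p"
  then obtain u where A: "A \<in> carrier (Qp p)" and "u \<in> A" and "\<forall>n. u n \<in> \<int>"
    unfolding Zp_def by blast
  obtain w where "padic_cauchy p w" and A_eq: "A = padic_class p w"
    using A by (rule Qp_carrier_cases)
  have "(w, u) \<in> padic_rel p"
    using \<open>u \<in> A\<close> unfolding A_eq padic_class_def by simp
  hence "padic_cauchy p u" and "A = padic_class p u"
    unfolding A_eq padic_class_def
    using equiv_class_eq[OF equiv_padic_rel] by (auto simp: padic_rel_def)
  thus "\<exists>u. padic_cauchy p u \<and> (\<forall>n. u n \<in> \<int>) \<and> A = padic_class p u"
    using \<open>\<forall>n. u n \<in> \<int>\<close> by blast
next
  assume "\<exists>u. padic_cauchy p u \<and> (\<forall>n. u n \<in> \<int>) \<and> A = padic_class p u"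
  then obtain u where "padic_cauchy p u" and "\<forall>n. u n \<in> \<int>" and "A = padic_class p u"
    by blast
  moreover have "u \<in> padic_class p u"
    using \<open>padic_cauchy p u\<close> by (simp add: padic_class_def padic_rel_def padic_null_iff)
  ultimately show "A \<in> Zp p"
    unfolding Zp_def using padic_class_in_carrier by blast
qed

lemma Zp_subset_carrier: "Zp p \<subseteq> carrier (Qp p)"
  unfolding Zp_def by blast

lemma Zp_closed:
  assumes "A \<in> Zp p" and "B \<in> Zp p"
  shows "A \<oplus>\<^bsub>Qp p\<^esub> B \<in> Zp p" and "A \<otimes>\<^bsub>Qp p\<^esub> B \<in> Zp p"
    and "\<ominus>\<^bsub>Qp p\<^esub> A \<in> Zp p"
proof -
  obtain u w where u: "padic_cauchy p u" "\<forall>n. u n \<in> \<int>" "A = padic_class p u"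
    and w: "padic_cauchy p w" "\<forall>n. w n \<in> \<int>" "B = padic_class p w"
    using assms unfolding Zp_iff by blast
  show "A \<oplus>\<^bsub>Qp p\<^esub> B \<in> Zp p"
    unfolding Zp_iff using u w
    by (intro exI[of _ "\<lambda>n. u n + w n"]) (simp add: padic_class_add padic_cauchy_add)
  show "A \<otimes>\<^bsub>Qp p\<^esub> B \<in> Zp p"
    unfolding Zp_iff using u w
    by (intro exI[of _ "\<lambda>n. u n * w n"]) (simp add: padic_class_mult padic_cauchy_mult)
  show "\<ominus>\<^bsub>Qp p\<^esub> A \<in> Zp p"
    unfolding Zp_iff using u
    by (intro exI[of _ "\<lambda>n. - u n"]) (simp add: padic_class_uminus padic_cauchy_uminus)
qed

lemma Zp_of_int: "padic_class p (\<lambda>_. of_int a) \<in> Zp p"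
  unfolding Zp_iff by (intro exI[of _ "\<lambda>_. of_int a"]) (simp add: padic_cauchy_const)

lemma vp_ge_frac_prime_power:
  assumes "b \<noteq> 0" and "\<not> int p dvd b"
  shows "vp_ge p (int n) (of_int (int p ^ n * c) / of_int b)"
proof (cases "c = 0")
  case False
  have "int p ^ n \<noteq> 0"
    using p by (simp add: prime_gt_0_nat)
  hence "rat_vp p (of_int (int p ^ n * c) / of_int b) = int_vp p (int p ^ n * c) - int_vp p b"
    using False assms(1) by (intro rat_vp_frac[OF p]) simp_all
  also have "\<dots> = int n + int_vp p c"
    using \<open>int p ^ n \<noteq> 0\<close> False not_dvd_imp_multiplicity_0[OF assms(2)] p
    by (simp add: int_vp_mult prime_imp_prime_elem)
  finally show ?thesis
    by (simp add: vp_ge_def)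
qed (simp add: vp_ge_def)

text \<open>If \<open>p\<close> does not divide \<open>b\<close>, Bezout gives \<open>b x\<^sub>n + p\<^sup>n y\<^sub>n = 1\<close>, so the integers \<open>a x\<^sub>n\<close>
  converge to \<open>a / b\<close>.\<close>
lemma Zp_frac:
  assumes b: "b \<noteq> 0" "\<not> int p dvd b"
  shows "padic_class p (\<lambda>_. of_int a / of_int b) \<in> Zp p"
proof -
  have "gcd b (int p ^ n) = 1" for n
    using prime_imp_coprime[of "int p" b] p b(2) by (simp add: coprime_commute)
  hence "\<exists>x y. b * x + int p ^ n * y = 1" for n
    using bezout_int[of b "int p ^ n"] by (metis mult.commute)
  then obtain x y where xy: "\<And>n. b * x n + int p ^ n * y n = 1"
    by metis
  define c :: "nat \<Rightarrow> rat" where "c n = of_int (a * x n)" for n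
  have diff: "of_int a / of_int b - c n = of_int (int p ^ n * (a * y n)) / of_int b" for n
  proof -
    have "(of_int a :: rat) = of_int (a * (b * x n + int p ^ n * y n))"
      using xy[of n] by simp
    thus ?thesis
      unfolding c_def using b by (simp add: field_simps)
  qed
  have null: "padic_null p (\<lambda>n. of_int a / of_int b - c n)"
    unfolding padic_null_iff diff
  proof
    fix k
    have "vp_ge p k (of_int (int p ^ n * (a * y n)) / of_int b)" if "nat k \<le> n" for n
      using that by (intro vp_ge_mono[OF _ vp_ge_frac_prime_power[OF b]]) linarith
    thus "\<exists>N. \<forall>n\<ge>N. vp_ge p k (of_int (int p ^ n * (a * y n)) / of_int b)"
      by blast
  qed
  have "padic_cauchy p (\<lambda>n. of_int a / of_int b + - (of_int a / of_int b - c n))"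
    using padic_cauchy_uminus[OF padic_null_imp_cauchy[OF null]]
    by (rule padic_cauchy_add[OF padic_cauchy_const])
  hence "padic_cauchy p c"
    by simp
  moreover have "padic_class p (\<lambda>_. of_int a / of_int b) = padic_class p c"
    using padic_class_eq_iff[OF padic_cauchy_const \<open>padic_cauchy p c\<close>] null by simp
  ultimately show ?thesis
    unfolding Zp_iff by (intro exI[of _ c]) (simp add: c_def)
qed

lemma rat_to_Qpbar_closed: "rat_to_Qpbar p r \<in> carrier (Qpbar p)"
proof -
  interpret e: ring_hom_cring "Qp p" "Qpbar p" "emb p"
    by (rule ring_hom_cring_emb)
  show ?thesis
    unfolding rat_to_Qpbar_def
    using padic_class_in_carrier[OF padic_cauchy_const] by (rule e.hom_closed)
qed

lemma rat_to_Qpbar_mult: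
  "rat_to_Qpbar p (r * s) = rat_to_Qpbar p r \<otimes>\<^bsub>Qpbar p\<^esub> rat_to_Qpbar p s"
proof -
  interpret e: ring_hom_cring "Qp p" "Qpbar p" "emb p"
    by (rule ring_hom_cring_emb)
  have "padic_class p (\<lambda>_. r * s) = padic_class p (\<lambda>_. r) \<otimes>\<^bsub>Qp p\<^esub> padic_class p (\<lambda>_. s)"
    by (simp add: padic_class_mult padic_cauchy_const)
  thus ?thesis
    unfolding rat_to_Qpbar_def
    by (simp add: e.hom_mult padic_class_in_carrier padic_cauchy_const)
qed

end

section \<open>Elements of \<open>\<int>\<^sub>p[\<alpha>]\<close> are integral over \<open>\<int>\<^sub>p\<close>\<close>

definition as_prime :: "nat \<Rightarrow> nat" where
  "as_prime q = (if prime q then q else 2)"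

lemma prime_as_prime: "prime (as_prime q)"
  unfolding as_prime_def by simp

lemma as_prime_eq [simp]: "prime q \<Longrightarrow> as_prime q = q"
  unfolding as_prime_def by simp

lemma cring_Qpbar_as_prime: "cring (Qpbar (as_prime q))"
  using cring_Qpbar[OF prime_as_prime] .

lemma ring_Qpbar_as_prime: "ring (Qpbar (as_prime q))"
  using cring.axioms(1)[OF cring_Qpbar_as_prime] .

text \<open>The determinant trick is only available for rings given as type class instances, and
  a type cannot depend on \<open>p\<close>. So integrality over \<open>\<int>\<^sub>p\<close> is studied in the product of
  all the fields \<open>Qpbar p\<close>, indexed by \<open>nat\<close> with non-primes padded by the field at \<open>2\<close>.\<close>
typedef qbar_prod = "{f :: nat \<Rightarrow> qbar. \<forall>q. f q \<in> carrier (Qpbar (as_prime q))}"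
  morphisms component Abs_qbar_prod
  by (auto intro!: exI[of _ "\<lambda>q. \<zero>\<^bsub>Qpbar (as_prime q)\<^esub>"]
      simp: ring.ring_simprules[OF ring_Qpbar_as_prime])

lemma component_closed [simp]: "component a q \<in> carrier (Qpbar (as_prime q))"
  using component[of a] by simp

lemma component_Abs:
  "(\<And>q. f q \<in> carrier (Qpbar (as_prime q))) \<Longrightarrow> component (Abs_qbar_prod f) = f"
  by (rule Abs_qbar_prod_inverse) simp

lemma qbar_prod_eqI: "(\<And>q. component a q = component b q) \<Longrightarrow> a = b"
  using component_inject by blast

instantiation qbar_prod :: comm_ring_1
begin

definition "0 = Abs_qbar_prod (\<lambda>q. \<zero>\<^bsub>Qpbar (as_prime q)\<^esub>)"
definition "1 = Abs_qbar_prod (\<lambda>q. \<one>\<^bsub>Qpbar (as_prime q)\<^esub>)"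
definition "a + b = Abs_qbar_prod (\<lambda>q. component a q \<oplus>\<^bsub>Qpbar (as_prime q)\<^esub> component b q)"
definition "a * b = Abs_qbar_prod (\<lambda>q. component a q \<otimes>\<^bsub>Qpbar (as_prime q)\<^esub> component b q)"
definition "- a = Abs_qbar_prod (\<lambda>q. \<ominus>\<^bsub>Qpbar (as_prime q)\<^esub> component a q)"
definition "(a::qbar_prod) - b = a + - b"

lemma component_0 [simp]: "component 0 q = \<zero>\<^bsub>Qpbar (as_prime q)\<^esub>"
  and component_1 [simp]: "component 1 q = \<one>\<^bsub>Qpbar (as_prime q)\<^esub>"
  and component_add [simp]: "component (a + b) q = component a q \<oplus>\<^bsub>Qpbar (as_prime q)\<^esub> component b q"
  and component_mult [simp]: "component (a * b) q = component a q \<otimes>\<^bsub>Qpbar (as_prime q)\<^esub> component b q"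
  and component_uminus [simp]: "component (- a) q = \<ominus>\<^bsub>Qpbar (as_prime q)\<^esub> component a q"
  unfolding zero_qbar_prod_def one_qbar_prod_def plus_qbar_prod_def times_qbar_prod_def
    uminus_qbar_prod_def
  by (subst component_Abs; simp add: ring.ring_simprules[OF ring_Qpbar_as_prime])+

instance
  by standard (auto intro!: qbar_prod_eqI simp: minus_qbar_prod_def
      cring.cring_simprules[OF cring_Qpbar_as_prime]
      monoid.r_one[OF ring.is_monoid[OF ring_Qpbar_as_prime]]
      not_sym[OF domain.one_not_zero[OF field.axioms(1)[OF field_Qpbar[OF prime_as_prime]]]]
      dest!: arg_cong[of _ _ "\<lambda>a. component a 0"])

end

lemma component_power: "component (x ^ k) q = component x q [^]\<^bsub>Qpbar (as_prime q)\<^esub> k"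
  by (induction k) (simp_all add: power_Suc2 del: power_Suc)

lemma component_sum:
  "finite A \<Longrightarrow> component (sum f A) q = finsum (Qpbar (as_prime q)) (\<lambda>i. component (f i) q) A"
  by (induction A rule: finite_induct)
    (simp_all add: abelian_monoid.finsum_empty abelian_monoid.finsum_insert
      abelian_group.axioms(1)[OF ring.is_abelian_group[OF ring_Qpbar_as_prime]] Pi_def)

lemma component_list_eval:
  "component (list_eval ts y) q =
     ring.eval (Qpbar (as_prime q)) (map (\<lambda>t. component t q) ts) (component y q)"
  by (induction ts)
    (simp_all add: ring.eval.simps[OF ring_Qpbar_as_prime] component_power)

definition qbar_single :: "nat \<Rightarrow> qbar \<Rightarrow> qbar_prod" where
  "qbar_single p x = Abs_qbar_prod (\<lambda>q. if q = p then x else \<zero>\<^bsub>Qpbar (as_prime q)\<^esub>)"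

definition Zp_at :: "nat \<Rightarrow> qbar_prod set" where
  "Zp_at p = {t. component t p \<in> emb p ` Zp p}"

context
  fixes p :: nat
  assumes p: "prime p"
begin

lemma component_single:
  "x \<in> carrier (Qpbar p) \<Longrightarrow>
     component (qbar_single p x) q = (if q = p then x else \<zero>\<^bsub>Qpbar (as_prime q)\<^esub>)"
  unfolding qbar_single_def using p
  by (subst component_Abs) (auto simp: ring.ring_simprules[OF ring_Qpbar_as_prime])

lemma single_add:
  assumes "x \<in> carrier (Qpbar p)" and "y \<in> carrier (Qpbar p)"
  shows "qbar_single p (x \<oplus>\<^bsub>Qpbar p\<^esub> y) = qbar_single p x + qbar_single p y"
proof (rule qbar_prod_eqI)
  fix q
  interpret R: ring "Qpbar (as_prime q)" by (rule ring_Qpbar_as_prime)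
  interpret P: ring "Qpbar p" by (rule ring_Qpbar[OF p])
  show "component (qbar_single p (x \<oplus>\<^bsub>Qpbar p\<^esub> y)) q = component (qbar_single p x + qbar_single p y) q"
    using assms p by (simp add: component_single)
qed

lemma single_mult_power:
  assumes "c \<in> carrier (Qpbar p)" and "x \<in> carrier (Qpbar p)"
  shows "qbar_single p c * qbar_single p x ^ k = qbar_single p (c \<otimes>\<^bsub>Qpbar p\<^esub> x [^]\<^bsub>Qpbar p\<^esub> k)"
proof (rule qbar_prod_eqI)
  fix q
  interpret R: ring "Qpbar (as_prime q)" by (rule ring_Qpbar_as_prime)
  interpret P: ring "Qpbar p" by (rule ring_Qpbar[OF p])
  show "component (qbar_single p c * qbar_single p x ^ k) q =
      component (qbar_single p (c \<otimes>\<^bsub>Qpbar p\<^esub> x [^]\<^bsub>Qpbar p\<^esub> k)) q"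
    using assms p by (simp add: component_single component_power)
qed

lemma single_power:
  assumes "1 \<le> k" and "x \<in> carrier (Qpbar p)"
  shows "qbar_single p x ^ k = qbar_single p (x [^]\<^bsub>Qpbar p\<^esub> k)"
proof (rule qbar_prod_eqI)
  fix q
  interpret R: ring "Qpbar (as_prime q)" by (rule ring_Qpbar_as_prime)
  interpret P: ring "Qpbar p" by (rule ring_Qpbar[OF p])
  show "component (qbar_single p x ^ k) q = component (qbar_single p (x [^]\<^bsub>Qpbar p\<^esub> k)) q"
    using assms p by (simp add: component_single component_power R.nat_pow_zero)
qed

lemma single_0: "qbar_single p \<zero>\<^bsub>Qpbar p\<^esub> = 0"
proof (rule qbar_prod_eqI)
  fix q
  interpret P: ring "Qpbar p" by (rule ring_Qpbar[OF p])
  show "component (qbar_single p \<zero>\<^bsub>Qpbar p\<^esub>) q = component 0 q"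
    using p by (simp add: component_single)
qed

lemma list_eval_single:
  assumes "set cs \<subseteq> carrier (Qpbar p)" and "x \<in> carrier (Qpbar p)"
  shows "list_eval (map (qbar_single p) cs) (qbar_single p x) =
           qbar_single p (ring.eval (Qpbar p) cs x)"
  using assms(1)
proof (induction cs)
  case Nil
  show ?case
    by (simp add: single_0 ring.eval.simps(1)[OF ring_Qpbar[OF p]])
next
  case (Cons c cs)
  interpret P: ring "Qpbar p" by (rule ring_Qpbar[OF p])
  show ?case
    using Cons assms(2) P.eval_in_carrier[of cs x] by (simp add: single_mult_power single_add)
qed

lemma comm_subring_Zp_at: "comm_subring (Zp_at p)"
proof -
  interpret e: ring_hom_cring "Qp p" "Qpbar p" "emb p"
    by (rule ring_hom_cring_emb[OF p])
  have carrier: "A \<in> Zp p \<Longrightarrow> A \<in> carrier (Qp p)" for A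
    using Zp_subset_carrier[OF p] by blast
  have "\<zero>\<^bsub>Qp p\<^esub> \<in> Zp p" and "\<one>\<^bsub>Qp p\<^esub> \<in> Zp p"
    using Zp_of_int[OF p, of 0] Zp_of_int[OF p, of 1] by (simp_all add: Qp_0[OF p] Qp_1[OF p])
  thus ?thesis
    unfolding Zp_at_def using p
    by unfold_locales
      (auto simp: carrier Zp_closed[OF p] simp flip: e.hom_add e.hom_mult e.hom_a_inv e.hom_zero e.hom_one)
qed


lemma emb_Zp_closed:
  assumes "x \<in> emb p ` Zp p"
  shows "x \<in> carrier (Qpbar p)"
proof -
  interpret e: ring_hom_cring "Qp p" "Qpbar p" "emb p"
    by (rule ring_hom_cring_emb[OF p])
  show ?thesis
    using assms Zp_subset_carrier[OF p] by auto
qed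

lemma single_in_Zp_at: "x \<in> emb p ` Zp p \<Longrightarrow> qbar_single p x \<in> Zp_at p"
  unfolding Zp_at_def using component_single[OF emb_Zp_closed] by simp

lemma Zpbar_monic_relation:
  assumes "\<alpha> \<in> Zpbar p"
  obtains cs where "set cs \<subseteq> emb p ` Zp p" and "1 \<le> length cs"
    and "\<alpha> [^]\<^bsub>Qpbar p\<^esub> length cs \<oplus>\<^bsub>Qpbar p\<^esub> ring.eval (Qpbar p) cs \<alpha> = \<zero>\<^bsub>Qpbar p\<^esub>"
proof -
  interpret P: ring "Qpbar p" by (rule ring_Qpbar[OF p])
  obtain q where q: "q \<noteq> []" "hd q = \<one>\<^bsub>Qpbar p\<^esub>" "set (tl q) \<subseteq> emb p ` Zp p"
    "P.eval q \<alpha> = \<zero>\<^bsub>Qpbar p\<^esub>" and \<alpha>: "\<alpha> \<in> carrier (Qpbar p)"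
    using assms unfolding Zpbar_def by blast
  hence "P.eval (\<one>\<^bsub>Qpbar p\<^esub> # tl q) \<alpha> = \<zero>\<^bsub>Qpbar p\<^esub>"
    by (metis list.collapse)
  hence eval: "\<alpha> [^]\<^bsub>Qpbar p\<^esub> length (tl q) \<oplus>\<^bsub>Qpbar p\<^esub> P.eval (tl q) \<alpha> = \<zero>\<^bsub>Qpbar p\<^esub>"
    using \<alpha> by simp
  moreover have "tl q \<noteq> []"
  proof
    assume "tl q = []"
    thus False
      using eval domain.one_not_zero[OF field.axioms(1)[OF field_Qpbar[OF p]]] by simp
  qed
  ultimately show thesis
    using that q(3) by (simp add: Suc_le_eq)
qed

lemma Zpbar_imp_pow_span:
  assumes "\<alpha> \<in> Zpbar p"
  obtains n where "1 \<le> n"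
    and "qbar_single p \<alpha> ^ n \<in> comm_subring.pow_span (Zp_at p) n (qbar_single p \<alpha>)"
proof -
  interpret P: ring "Qpbar p" by (rule ring_Qpbar[OF p])
  interpret S: comm_subring "Zp_at p" by (rule comm_subring_Zp_at)
  obtain cs where cs: "set cs \<subseteq> emb p ` Zp p" and n: "1 \<le> length cs"
    and eval: "\<alpha> [^]\<^bsub>Qpbar p\<^esub> length cs \<oplus>\<^bsub>Qpbar p\<^esub> P.eval cs \<alpha> = \<zero>\<^bsub>Qpbar p\<^esub>"
    using Zpbar_monic_relation[OF assms] by blast
  have \<alpha>: "\<alpha> \<in> carrier (Qpbar p)"
    using assms unfolding Zpbar_def by blast
  have cs_carrier: "set cs \<subseteq> carrier (Qpbar p)"
    using cs emb_Zp_closed by blast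
  let ?a = "qbar_single p \<alpha>" and ?n = "length cs"
  have "?a ^ ?n + list_eval (map (qbar_single p) cs) ?a =
      qbar_single p (\<alpha> [^]\<^bsub>Qpbar p\<^esub> ?n) + qbar_single p (P.eval cs \<alpha>)"
    using \<alpha> cs_carrier n by (simp add: single_power list_eval_single)
  also have "\<dots> = qbar_single p (\<alpha> [^]\<^bsub>Qpbar p\<^esub> ?n \<oplus>\<^bsub>Qpbar p\<^esub> P.eval cs \<alpha>)"
    using \<alpha> P.eval_in_carrier[OF cs_carrier \<alpha>] by (simp add: single_add)
  also have "\<dots> = 0"
    unfolding eval by (rule single_0)
  finally have "?a ^ ?n = - 1 * list_eval (map (qbar_single p) cs) ?a"
    by (simp add: eq_neg_iff_add_eq_0)
  also have "\<dots> \<in> S.pow_span ?n ?a"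
    using cs single_in_Zp_at
    by (intro S.pow_span_mult[OF S.uminus_mem[OF S.one_mem]] S.list_eval_in_pow_span) auto
  finally show thesis
    using n that by blast
qed

lemma integral_over_Zp_at_imp_Zpbar:
  assumes "integral_over (Zp_at p) y"
  shows "component y p \<in> Zpbar p"
proof -
  obtain Q where Q: "lead_coeff Q = 1" "Q \<in> polys_over (Zp_at p)" "poly Q y = 0"
    using assms unfolding integral_over_def by blast
  define L where "L = map (\<lambda>t. component t p) (rev (map (coeff Q) [0..<Suc (degree Q)]))"
  have "ring.eval (Qpbar p) L (component y p) = component (poly Q y) p"
    unfolding L_def poly_eq_list_eval component_list_eval using p by simp
  hence "ring.eval (Qpbar p) L (component y p) = \<zero>\<^bsub>Qpbar p\<^esub>"
    using Q(3) p by simp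
  moreover have "L \<noteq> []" and "hd L = \<one>\<^bsub>Qpbar p\<^esub>"
    unfolding L_def using Q(1) p by simp_all
  moreover have "set (tl L) \<subseteq> emb p ` Zp p"
    using Q(2) list.set_sel(2)[OF \<open>L \<noteq> []\<close>]
    unfolding L_def by (auto simp: polys_over_def Zp_at_def)
  moreover have "component y p \<in> carrier (Qpbar p)"
    using component_closed[of y p] p by simp
  ultimately show ?thesis
    unfolding Zpbar_def by blast
qed

lemma Zpbar_sum_power:
  assumes "\<alpha> \<in> Zpbar p" and "\<And>i. c i \<in> Zp p"
  shows "finsum (Qpbar p) (\<lambda>i. emb p (c i) \<otimes>\<^bsub>Qpbar p\<^esub> \<alpha> [^]\<^bsub>Qpbar p\<^esub> i) {..(d::nat)} \<in> Zpbar p"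
proof -
  interpret S: comm_subring "Zp_at p" by (rule comm_subring_Zp_at)
  interpret P: ring "Qpbar p" by (rule ring_Qpbar[OF p])
  define y where "y = (\<Sum>i\<le>d. qbar_single p (emb p (c i)) * qbar_single p \<alpha> ^ i)"
  obtain n where "1 \<le> n" and "qbar_single p \<alpha> ^ n \<in> S.pow_span n (qbar_single p \<alpha>)"
    using Zpbar_imp_pow_span[OF assms(1)] by blast
  hence "integral_over (Zp_at p) y"
    unfolding y_def using assms(2) by (intro S.integral_over_sum_power single_in_Zp_at) auto
  moreover have "\<alpha> \<in> carrier (Qpbar p)" and "\<And>i. emb p (c i) \<in> carrier (Qpbar p)"
    using assms emb_Zp_closed unfolding Zpbar_def by auto
  hence "component y p = finsum (Qpbar p) (\<lambda>i. emb p (c i) \<otimes>\<^bsub>Qpbar p\<^esub> \<alpha> [^]\<^bsub>Qpbar p\<^esub> i) {..d}"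
    unfolding y_def using p by (simp add: component_sum single_mult_power component_single)
  ultimately show ?thesis
    using integral_over_Zp_at_imp_Zpbar by metis
qed

lemma Zpbar_mult:
  assumes "\<alpha> \<in> Zpbar p" and "c \<in> Zp p"
  shows "emb p c \<otimes>\<^bsub>Qpbar p\<^esub> \<alpha> \<in> Zpbar p"
proof -
  interpret S: comm_subring "Zp_at p" by (rule comm_subring_Zp_at)
  interpret P: ring "Qpbar p" by (rule ring_Qpbar[OF p])
  define y where "y = qbar_single p (emb p c) * qbar_single p \<alpha>"
  obtain n where "1 \<le> n" and "qbar_single p \<alpha> ^ n \<in> S.pow_span n (qbar_single p \<alpha>)"
    using Zpbar_imp_pow_span[OF assms(1)] by blast
  hence "integral_over (Zp_at p) y"
    unfolding y_def using assms(2) by (intro S.integral_over_mult single_in_Zp_at) auto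
  moreover have "\<alpha> \<in> carrier (Qpbar p)" and "emb p c \<in> carrier (Qpbar p)"
    using assms emb_Zp_closed unfolding Zpbar_def by auto
  hence "component y p = emb p c \<otimes>\<^bsub>Qpbar p\<^esub> \<alpha>"
    unfolding y_def using single_mult_power[of "emb p c" \<alpha> 1]
    by (simp add: component_single)
  ultimately show ?thesis
    using integral_over_Zp_at_imp_Zpbar by metis
qed

end

section \<open>Localization\<close>

lemma qeval_smult:
  assumes p: "prime p" and \<alpha>: "\<alpha> \<in> carrier (Qpbar p)" and c: "c \<noteq> 0"
  shows "qeval p (smult c f) \<alpha> = rat_to_Qpbar p c \<otimes>\<^bsub>Qpbar p\<^esub> qeval p f \<alpha>"
proof -
  interpret R: cring "Qpbar p"
    by (rule cring_Qpbar[OF p])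
  have "qeval p (smult c f) \<alpha> = finsum (Qpbar p) (\<lambda>i. rat_to_Qpbar p c \<otimes>\<^bsub>Qpbar p\<^esub>
      (rat_to_Qpbar p (coeff f i) \<otimes>\<^bsub>Qpbar p\<^esub> \<alpha> [^]\<^bsub>Qpbar p\<^esub> i)) {..degree f}"
    unfolding qeval_def using c \<alpha> rat_to_Qpbar_closed[OF p]
    by (intro R.finsum_cong') (auto simp: rat_to_Qpbar_mult[OF p] R.m_assoc)
  also have "\<dots> = rat_to_Qpbar p c \<otimes>\<^bsub>Qpbar p\<^esub> qeval p f \<alpha>"
    unfolding qeval_def using \<alpha> rat_to_Qpbar_closed[OF p]
    by (intro R.finsum_rdistr[symmetric]) auto
  finally show ?thesis .
qed

lemma qeval_in_Zpbar:
  assumes "prime p" and "\<alpha> \<in> Zpbar p" and "\<And>i. padic_class p (\<lambda>_. coeff f i) \<in> Zp p"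
  shows "qeval p f \<alpha> \<in> Zpbar p"
  unfolding qeval_def rat_to_Qpbar_def using Zpbar_sum_power[OF assms] .

lemma smult_in_IntQ:
  assumes p: "prime p" and E: "E \<subseteq> Zpbar p" and c: "c \<noteq> 0" "padic_class p (\<lambda>_. c) \<in> Zp p"
    and g: "g \<in> IntQ p E"
  shows "smult c g \<in> IntQ p E"
  unfolding IntQ_def
proof (intro CollectI ballI)
  fix \<alpha>
  assume "\<alpha> \<in> E"
  hence "\<alpha> \<in> carrier (Qpbar p)" and "qeval p g \<alpha> \<in> Zpbar p"
    using E g unfolding Zpbar_def IntQ_def by auto
  thus "qeval p (smult c g) \<alpha> \<in> Zpbar p"
    using Zpbar_mult[OF p _ c(2)] qeval_smult[OF p _ c(1)] unfolding rat_to_Qpbar_def by simp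
qed

lemma mult_gen_pos: "s \<in> mult_gen P \<Longrightarrow> 0 < s"
  by (induction rule: mult_gen.induct) (auto simp: prime_gt_0_nat)

lemma mult_gen_not_dvd:
  assumes "s \<in> mult_gen P" and "p \<in> P" and "prime p"
  shows "\<not> int p dvd s"
  using assms(1)
proof (induction rule: mult_gen.induct)
  case one
  show ?case
    using prime_gt_1_nat[OF assms(3)] by simp
next
  case (step q s)
  have "p \<noteq> q"
    using assms(2) step.hyps(2) by blast
  hence "\<not> p dvd q"
    using primes_dvd_imp_eq[OF assms(3) step.hyps(1)] by blast
  hence "\<not> int p dvd int q"
    by simp
  moreover have "prime (int p)"
    using assms(3) by simp
  ultimately show ?case
    using step.IH by (simp add: prime_dvd_mult_iff)
qed

lemma mult_gen_decomposition:
  fixes D :: nat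
  assumes "0 < D"
  shows "\<exists>s t. int D = s * int t \<and> s \<in> mult_gen P \<and> 0 < t \<and> (\<forall>q. prime q \<longrightarrow> q dvd t \<longrightarrow> q \<in> P)"
  using assms
proof (induction D rule: prime_divisors_induct)
  case (unit x)
  hence "x = 1"
    by simp
  have "\<not> q dvd 1" if "prime q" for q :: nat
    using prime_gt_1_nat[OF that] by simp
  thus ?case
    using \<open>x = 1\<close> by (intro exI[of _ 1] exI[of _ 1]) (simp add: mult_gen.one)
next
  case (factor q x)
  hence "0 < x"
    by simp
  then obtain s t where st: "int x = s * int t" "s \<in> mult_gen P" "0 < t"
    "\<forall>r. prime r \<longrightarrow> r dvd t \<longrightarrow> r \<in> P"
    using factor.IH by blast
  show ?case
  proof (cases "q \<in> P")
    case True
    have "r \<in> P" if "prime r" and "r dvd q * t" for r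
    proof -
      have "r dvd q \<or> r dvd t"
        using that by (simp add: prime_dvd_mult_iff)
      thus ?thesis
        using st(4) that(1) True factor.hyps primes_dvd_imp_eq by blast
    qed
    thus ?thesis
      using st factor.hyps prime_gt_0_nat[of q]
      by (intro exI[of _ s] exI[of _ "q * t"]) (simp add: algebra_simps)
  next
    case False
    thus ?thesis
      using st mult_gen.step[OF factor.hyps False st(2)]
      by (intro exI[of _ "int q * s"] exI[of _ t]) (simp add: algebra_simps)
  qed
qed simp

lemma common_denominator:
  fixes f :: "rat poly"
  obtains D :: nat where "0 < D" and "\<And>i. of_nat D * coeff f i \<in> \<int>"
proof -
  define den where "den i = snd (quotient_of (coeff f i))" for i
  define num where "num i = fst (quotient_of (coeff f i))" for i
  have den_pos: "den i > 0" for i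
    unfolding den_def using quotient_of_denom_pos' .
  have coeff_eq: "coeff f i = of_int (num i) / of_int (den i)" for i
    unfolding num_def den_def using quotient_of_div[of "coeff f i"] by (cases "quotient_of (coeff f i)") auto
  define D where "D = nat (\<Prod>i\<le>degree f. den i)"
  have D: "int D = (\<Prod>i\<le>degree f. den i)"
    unfolding D_def using den_pos by (simp add: prod_pos order.strict_implies_order)
  have "of_nat D * coeff f i \<in> \<int>" for i
  proof (cases "i \<le> degree f")
    case True
    have "(\<Prod>i\<le>degree f. den i) = den i * (\<Prod>j\<in>{..degree f} - {i}. den j)"
      using True by (subst prod.remove[of _ i]) auto
    hence "(of_nat D :: rat) = of_int (den i) * of_int (\<Prod>j\<in>{..degree f} - {i}. den j)"
      using D by (metis of_int_mult of_int_of_nat_eq)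
    hence "of_nat D * coeff f i = of_int (num i) * of_int (\<Prod>j\<in>{..degree f} - {i}. den j)"
      unfolding coeff_eq using den_pos[of i] by (simp add: field_simps)
    thus ?thesis
      by (simp only: Ints_mult Ints_of_int)
  qed (simp add: coeff_eq_0)
  moreover have "0 < D"
    using D den_pos by (metis of_nat_0_less_iff prod_pos)
  ultimately show thesis
    using that by blast
qed

lemma exists_mult_gen_smult_in_IntQ_family:
  assumes E: "\<And>p. prime p \<Longrightarrow> E p \<subseteq> Zpbar p"
    and f: "\<And>p. p \<in> P \<Longrightarrow> prime p \<Longrightarrow> f \<in> IntQ p (E p)"
  obtains s where "s \<in> mult_gen P" and "smult (of_int s) f \<in> IntQ_family E"
proof -
  obtain D :: nat where "0 < D" and D: "\<And>i. of_nat D * coeff f i \<in> \<int>"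
    using common_denominator[of f] by blast
  then obtain s t where st: "int D = s * int t" "s \<in> mult_gen P" "0 < t"
    "\<forall>q. prime q \<longrightarrow> q dvd t \<longrightarrow> q \<in> P"
    using mult_gen_decomposition by blast
  have "smult (of_int s) f \<in> IntQ p (E p)" if p: "prime p" for p
  proof (cases "p \<in> P")
    case True
    show ?thesis
      using smult_in_IntQ[OF p E[OF p] _ Zp_of_int[OF p] f[OF True p]] mult_gen_pos[OF st(2)]
      by simp
  next
    case False
    have "\<not> int p dvd int t"
      using st(4) p False by auto
    have "padic_class p (\<lambda>_. coeff (smult (of_int s) f) i) \<in> Zp p" for i
    proof -
      obtain m where m: "of_nat D * coeff f i = of_int m"
        using D[of i] Ints_cases by metis
      have "(of_nat D :: rat) = of_int s * of_int (int t)"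
        using st(1) by (metis of_int_mult of_int_of_nat_eq)
      hence "coeff (smult (of_int s) f) i = of_int m / of_int (int t)"
        using m st(3) by (simp add: field_simps)
      thus ?thesis
        using Zp_frac[OF p, of "int t" m] st(3) \<open>\<not> int p dvd int t\<close> by simp
    qed
    thus ?thesis
      unfolding IntQ_def using E[OF p] by (auto intro: qeval_in_Zpbar[OF p])
  qed
  thus thesis
    using that st(2) unfolding IntQ_family_def by blast
qed

lemma loc_IntQ_family_eq:
  assumes E: "\<And>p. prime p \<Longrightarrow> E p \<subseteq> Zpbar p" and P: "\<forall>p\<in>P. prime p"
    and S: "mult_gen P \<subseteq> S" "\<And>s. s \<in> S \<Longrightarrow> s \<noteq> 0"
      "\<And>s p. s \<in> S \<Longrightarrow> p \<in> P \<Longrightarrow> \<not> int p dvd s"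
  shows "loc S (IntQ_family E) = {f. \<forall>p\<in>P. f \<in> IntQ p (E p)}"
proof
  show "loc S (IntQ_family E) \<subseteq> {f. \<forall>p\<in>P. f \<in> IntQ p (E p)}"
  proof
    fix h
    assume "h \<in> loc S (IntQ_family E)"
    then obtain g s where h: "h = smult (1 / of_int s) g" and "g \<in> IntQ_family E" "s \<in> S"
      unfolding loc_def by blast
    have "h \<in> IntQ p (E p)" if "p \<in> P" for p
    proof -
      have p: "prime p"
        using P that by blast
      have "padic_class p (\<lambda>_. 1 / of_int s) \<in> Zp p"
        using Zp_frac[OF p, of s 1] S(2,3) \<open>s \<in> S\<close> that by simp
      thus ?thesis
        unfolding h using \<open>g \<in> IntQ_family E\<close> S(2) \<open>s \<in> S\<close> p
        by (intro smult_in_IntQ[OF p E[OF p]]) (auto simp: IntQ_family_def)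
    qed
    thus "h \<in> {f. \<forall>p\<in>P. f \<in> IntQ p (E p)}"
      by blast
  qed
next
  show "{f. \<forall>p\<in>P. f \<in> IntQ p (E p)} \<subseteq> loc S (IntQ_family E)"
  proof
    fix f
    assume "f \<in> {f. \<forall>p\<in>P. f \<in> IntQ p (E p)}"
    then obtain s where "s \<in> mult_gen P" and "smult (of_int s) f \<in> IntQ_family E"
      using exists_mult_gen_smult_in_IntQ_family[OF E] by blast
    moreover have "f = smult (1 / of_int s) (smult (of_int s) f)"
      using mult_gen_pos[OF \<open>s \<in> mult_gen P\<close>] by simp
    ultimately show "f \<in> loc S (IntQ_family E)"
      unfolding loc_def using S(1) by blast
  qed
qed

theorem mainTheorem1:
  fixes E :: "nat \<Rightarrow> qbar set" and P :: "nat set"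
  assumes "\<And>p. prime p \<Longrightarrow> E p \<subseteq> Zpbar p"
    and "finite P" and "\<forall>p\<in>P. prime p"
  shows "loc (mult_gen P) (IntQ_family E) = {f. \<forall>p\<in>P. f \<in> IntQ p (E p)} \<and>
         (\<forall>p. prime p \<longrightarrow> loc {s. \<not> int p dvd s} (IntQ_family E) = IntQ p (E p))"
proof (intro conjI allI impI)
  show "loc (mult_gen P) (IntQ_family E) = {f. \<forall>p\<in>P. f \<in> IntQ p (E p)}"
    using assms(3) mult_gen_not_dvd
    by (intro loc_IntQ_family_eq[OF assms(1,3)]) (auto dest: mult_gen_pos)
next
  fix p :: nat
  assume p: "prime p"
  have "loc {s. \<not> int p dvd s} (IntQ_family E) = {f. \<forall>q\<in>{p}. f \<in> IntQ q (E q)}"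
    using p mult_gen_not_dvd[of _ "{p}" p]
    by (intro loc_IntQ_family_eq[OF assms(1)]) auto
  thus "loc {s. \<not> int p dvd s} (IntQ_family E) = IntQ p (E p)"
    by simp
qed

end
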